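(* Let $p$ be a prime, $q=p^r$, and let $l$ be an integer with $0\le l\le 2r-1$. Every root of the equation $X^{1+p^l}+1=0$ in $\mathrm{GF}(q^2)$ lies in $\mathrm{GF}(q)$ (equivalently, $\alpha^{1+p^l}+\beta^{1+p^l}\neq0$ for every basis $\{\alpha,\beta\}$ of $\mathrm{GF}(q^2)$ over $\mathrm{GF}(q)$) if and only if either (i) $p=2$ and $\gcd(2^l+1,2^r+1)=1$; or (ii) $p$ is odd and at least one of the following holds: (a) there is a power of two which divides $p^r-1$ but does not divide $p^l+1$, and $\gcd(p^l+1,p^r+1)=2$; (b) every power of two dividing $p^{2r}-1$ divides $p^l+1$. *)

theory Defs
  imports "HOL-Computational_Algebra.Primes" "HOL-Library.Cardinality"
begin

definition is_subfield :: "'a::field set \<Rightarrow> bool" where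
  "is_subfield K \<longleftrightarrow> 0 \<in> K \<and> 1 \<in> K \<and>
     (\<forall>x\<in>K. \<forall>y\<in>K. x + y \<in> K \<and> x * y \<in> K) \<and>
     (\<forall>x\<in>K. - x \<in> K) \<and> (\<forall>x\<in>K. x \<noteq> 0 \<longrightarrow> inverse x \<in> K)"

end

theory Submission
  imports Defs "HOL-Number_Theory.Residues" "HOL-Computational_Algebra.Polynomial"
begin

(*
  The multiplicative group of GF(q^2) is cyclic of order N = q^2 - 1; if g generates it, GF(q)
  consists of 0 and the powers g^e with q + 1 dividing e. Writing -1 = g^m (m = 0 in characteristic 2,
  m = N/2 otherwise), the roots of X^n + 1 are the g^e with e n = m (mod N), so the question is
  whether every solution e of this linear congruence is divisible by q + 1. The solutions, if any,
  form one residue class modulo N / gcd(n, N); hence all of them are divisible by q + 1 iff some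
  solution is and gcd(n, N) divides q - 1. For m = 0 this says gcd(n, q + 1) = 1. For m = N/2
  both solvability questions are decided by comparing the powers of 2 in n, q - 1 and N, which
  gives the stated conditions.
*)

lemma cong_mult_right_cancel_gcd:
  fixes a b n N :: nat
  assumes "N > 0" and "[a * n = b * n] (mod N)"
  shows "[a = b] (mod N div gcd n N)"
proof -
  define d where "d = gcd n N"
  have "d > 0" using \<open>N > 0\<close> by (simp add: d_def)
  have n: "n = d * (n div d)" and N: "N = d * (N div d)"
    by (simp_all add: d_def)
  have "coprime (n div d) (N div d)"
    using \<open>N > 0\<close> unfolding d_def by (intro div_gcd_coprime) simp
  have "[d * (a * (n div d)) = d * (b * (n div d))] (mod d * (N div d))"
    using assms(2) n N by (metis mult.left_commute)
  then have "[a * (n div d) = b * (n div d)] (mod N div d)"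
    using \<open>d > 0\<close> by (simp add: cong_def mod_mult_mult1)
  then show ?thesis
    using \<open>coprime (n div d) (N div d)\<close> by (simp add: cong_mult_rcancel_nat d_def)
qed

lemma cong_solvable_iff:
  fixes n m N :: nat
  shows "(\<exists>e. [e * n = m] (mod N)) \<longleftrightarrow> gcd n N dvd m"
proof
  assume "\<exists>e. [e * n = m] (mod N)"
  then obtain e where "[e * n = m] (mod gcd n N)"
    using cong_dvd_modulus_nat by blast
  then show "gcd n N dvd m"
    using cong_dvd_iff by force
next
  assume "gcd n N dvd m"
  then show "\<exists>e. [e * n = m] (mod N)"
    using cong_solve_dvd_nat by (metis mult.commute)
qed

lemma cong_solvable_in_multiples_iff:
  fixes c n h L :: nat
  assumes "c > 0"
  shows "(\<exists>e. c dvd e \<and> [e * n = c * h] (mod c * L)) \<longleftrightarrow> (\<exists>f. [f * n = h] (mod L))"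
proof -
  have "[c * f * n = c * h] (mod c * L) \<longleftrightarrow> [f * n = h] (mod L)" for f
    using assms by (simp add: cong_def mod_mult_mult1 mult.assoc)
  then show ?thesis
    by (blast elim: dvdE intro: dvd_triv_left)
qed

lemma cong_add_div_gcd_mult:
  fixes e n N :: nat
  shows "[(e + N div gcd n N) * n = e * n] (mod N)"
proof -
  have "N div gcd n N * n = N * (n div gcd n N)"
    by (metis div_mult_swap dvd_div_mult gcd_dvd1 gcd_dvd2)
  then show ?thesis
    by (simp add: algebra_simps cong_def)
qed

lemma all_cong_solutions_dvd_iff:
  fixes n m c L :: nat
  assumes "c > 0" and "L > 0"
  shows "(\<forall>e. [e * n = m] (mod c * L) \<longrightarrow> c dvd e) \<longleftrightarrow>
    (\<nexists>e. [e * n = m] (mod c * L)) \<or>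
    ((\<exists>e. c dvd e \<and> [e * n = m] (mod c * L)) \<and> gcd n (c * L) dvd L)"
proof -
  define N where "N = c * L"
  define d where "d = gcd n N"
  have "N > 0" "d > 0" "d dvd N"
    using assms by (simp_all add: N_def d_def)
  have dvd_swap: "c dvd N div d \<longleftrightarrow> d dvd L"
    using assms \<open>d > 0\<close> \<open>d dvd N\<close> by (simp add: N_def dvd_div_iff_mult mult.commute)
  show ?thesis
    unfolding N_def[symmetric] d_def[symmetric]
  proof
    assume all: "\<forall>e. [e * n = m] (mod N) \<longrightarrow> c dvd e"
    show "(\<nexists>e. [e * n = m] (mod N)) \<or> ((\<exists>e. c dvd e \<and> [e * n = m] (mod N)) \<and> d dvd L)"
    proof (cases "\<exists>e. [e * n = m] (mod N)")
      case True
      then obtain e where e: "[e * n = m] (mod N)" ..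
      then have "[(e + N div d) * n = m] (mod N)"
        using cong_add_div_gcd_mult cong_trans unfolding d_def by blast
      then have "c dvd e" "c dvd e + N div d"
        using all e by blast+
      then have "c dvd N div d"
        by (simp add: dvd_add_right_iff)
      then show ?thesis
        using e \<open>c dvd e\<close> dvd_swap by auto
    qed simp
  next
    assume "(\<nexists>e. [e * n = m] (mod N)) \<or> ((\<exists>e. c dvd e \<and> [e * n = m] (mod N)) \<and> d dvd L)"
    show "\<forall>e. [e * n = m] (mod N) \<longrightarrow> c dvd e"
    proof (intro allI impI)
      fix e
      assume e: "[e * n = m] (mod N)"
      with \<open>_ \<or> _\<close> obtain e1 where e1: "c dvd e1" "[e1 * n = m] (mod N)" and "d dvd L"
        by auto
      have "[e * n = e1 * n] (mod N)"
        using e e1(2) by (metis cong_sym cong_trans)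
      then have "[e = e1] (mod N div d)"
        using cong_mult_right_cancel_gcd \<open>N > 0\<close> by (simp add: d_def)
      then have "[e = e1] (mod c)"
        using \<open>d dvd L\<close> dvd_swap cong_dvd_modulus_nat by blast
      then show "c dvd e"
        using e1(1) cong_dvd_iff by blast
    qed
  qed
qed

lemma two_mult_gcd_dvd_iff:
  fixes n N :: nat
  assumes "N > 0"
  shows "2 * gcd n N dvd N \<longleftrightarrow> (\<exists>k. 2 ^ k dvd N \<and> \<not> 2 ^ k dvd n)"
proof
  assume "2 * gcd n N dvd N"
  define k where "k = multiplicity 2 N"
  have "2 ^ k dvd N" "\<not> 2 ^ Suc k dvd N"
    using \<open>N > 0\<close> power_dvd_iff_le_multiplicity[of N 2 "Suc k"]
    by (simp_all add: k_def multiplicity_dvd)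
  moreover have "\<not> 2 ^ k dvd n"
  proof
    assume "2 ^ k dvd n"
    with \<open>2 ^ k dvd N\<close> have "2 ^ Suc k dvd 2 * gcd n N"
      by simp
    with \<open>2 * gcd n N dvd N\<close> \<open>\<not> 2 ^ Suc k dvd N\<close> show False
      using dvd_trans by blast
  qed
  ultimately show "\<exists>k. 2 ^ k dvd N \<and> \<not> 2 ^ k dvd n"
    by blast
next
  assume "\<exists>k. 2 ^ k dvd N \<and> \<not> 2 ^ k dvd n"
  then obtain k where k: "2 ^ k dvd N" "\<not> 2 ^ k dvd n"
    by blast
  obtain s where s: "N = gcd n N * s"
    by (metis gcd_dvd2 dvdE)
  have "even s"
  proof (rule ccontr)
    assume "odd s"
    then have "2 ^ k dvd gcd n N"
      using k(1) s by (metis coprime_dvd_mult_left_iff coprime_power_left_iff odd_one coprime_left_2_iff_odd)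
    then show False
      using k(2) dvd_trans gcd_dvd1 by blast
  qed
  then obtain t where "s = 2 * t" ..
  with s have "N = 2 * gcd n N * t"
    by simp
  then show "2 * gcd n N dvd N"
    by (metis dvd_triv_left)
qed

lemma cong_half_solvable_iff:
  fixes n N :: nat
  assumes "even N" and "N > 0"
  shows "(\<exists>e. [e * n = N div 2] (mod N)) \<longleftrightarrow> (\<exists>k. 2 ^ k dvd N \<and> \<not> 2 ^ k dvd n)"
proof -
  have "(\<exists>e. [e * n = N div 2] (mod N)) \<longleftrightarrow> 2 * gcd n N dvd N"
    using \<open>even N\<close> by (simp add: cong_solvable_iff dvd_div_iff_mult mult.commute)
  also have "\<dots> \<longleftrightarrow> (\<exists>k. 2 ^ k dvd N \<and> \<not> 2 ^ k dvd n)"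
    by (rule two_mult_gcd_dvd_iff) fact
  finally show ?thesis .
qed

lemma gcd_diff_one_add_one_dvd_two: "gcd (q - 1) (q + 1) dvd (2::nat)"
proof (cases "q = 0")
  case False
  have "gcd (q - 1) (q + 1) dvd (q + 1) - (q - 1)"
    by (rule dvd_diff_nat) simp_all
  with False show ?thesis
    by simp
qed simp

lemma gcd_mult_dvd_iff_coprime:
  fixes a b n :: nat
  assumes "coprime a b"
  shows "gcd n (a * b) dvd b \<longleftrightarrow> coprime n a"
proof
  assume "gcd n (a * b) dvd b"
  then have "gcd n a dvd gcd a b"
    by (metis dvd_trans gcd_dvd2 gcd_greatest gcd_mono dvd_refl dvd_triv_left)
  then have "gcd n a = 1"
    using assms by (metis coprime_iff_gcd_eq_1 nat_dvd_1_iff_1)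
  then show "coprime n a"
    by (simp add: coprime_iff_gcd_eq_1)
next
  assume "coprime n a"
  then show "gcd n (a * b) dvd b"
    by (simp only: gcd_mult_right_left_cancel gcd_dvd2)
qed

lemma gcd_dvd_pred_iff_gcd_succ_eq_2:
  fixes q n :: nat
  assumes "odd q" "q > 1" "even n" and "\<exists>k. 2 ^ k dvd q - 1 \<and> \<not> 2 ^ k dvd n"
  shows "gcd n ((q + 1) * (q - 1)) dvd q - 1 \<longleftrightarrow> gcd n (q + 1) = 2"
proof
  assume "gcd n ((q + 1) * (q - 1)) dvd q - 1"
  then have "gcd n (q + 1) dvd gcd (q - 1) (q + 1)"
    by (metis dvd_trans gcd_dvd2 gcd_greatest gcd_mono dvd_refl dvd_triv_left)
  then have "gcd n (q + 1) dvd 2"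
    using gcd_diff_one_add_one_dvd_two dvd_trans by blast
  moreover have "2 dvd gcd n (q + 1)"
    using assms by simp
  ultimately show "gcd n (q + 1) = 2"
    by (simp add: dvd_antisym)
next
  assume "gcd n (q + 1) = 2"
  obtain n' h where n': "n = 2 * n'" and h: "q + 1 = 2 * h"
    using assms by (metis evenE odd_even_add odd_one)
  have "coprime n' h"
    using \<open>gcd n (q + 1) = 2\<close> unfolding n' h
    by (simp add: gcd_mult_distrib_nat[symmetric] coprime_iff_gcd_eq_1)
  then have "gcd n ((q + 1) * (q - 1)) = 2 * gcd n' (q - 1)"
    unfolding n' h by (simp add: gcd_mult_distrib_nat[symmetric] mult.assoc gcd_mult_right_left_cancel)
  also have "\<dots> dvd 2 * gcd n (q - 1)"
    by (simp add: n' gcd_mono)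
  also have "\<dots> dvd q - 1"
    using two_mult_gcd_dvd_iff[of "q - 1" n] assms by simp
  finally show "gcd n ((q + 1) * (q - 1)) dvd q - 1" .
qed

lemma all_cong_solutions_dvd_iff_even:
  fixes q n :: nat
  assumes "even q" and "q > 0"
  shows "(\<forall>e. [e * n = 0] (mod q\<^sup>2 - 1) \<longrightarrow> q + 1 dvd e) \<longleftrightarrow> coprime n (q + 1)"
proof -
  have N: "q\<^sup>2 - 1 = (q + 1) * (q - 1)"
    by (simp add: power2_eq_square algebra_simps)
  have "q > 1"
    using assms by presburger
  have "gcd (q + 1) (q - 1) dvd gcd 2 (q + 1)"
    using gcd_diff_one_add_one_dvd_two[of q] by (simp add: gcd.commute)
  also have "gcd 2 (q + 1) = 1"
    using \<open>even q\<close> coprime_left_2_iff_odd[of "q + 1"] by (simp only: coprime_iff_gcd_eq_1) simp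
  finally have "coprime (q + 1) (q - 1)"
    by (simp add: coprime_iff_gcd_eq_1)
  have "(\<forall>e. [e * n = 0] (mod (q + 1) * (q - 1)) \<longrightarrow> q + 1 dvd e) \<longleftrightarrow>
      (\<nexists>e. [e * n = 0] (mod (q + 1) * (q - 1))) \<or>
      ((\<exists>e. q + 1 dvd e \<and> [e * n = 0] (mod (q + 1) * (q - 1))) \<and> gcd n ((q + 1) * (q - 1)) dvd q - 1)"
    by (rule all_cong_solutions_dvd_iff) (use \<open>q > 1\<close> in simp_all)
  also have "\<dots> \<longleftrightarrow> gcd n ((q + 1) * (q - 1)) dvd q - 1"
  proof -
    have "\<exists>e. [e * n = 0] (mod (q + 1) * (q - 1))"
      and "\<exists>e. q + 1 dvd e \<and> [e * n = 0] (mod (q + 1) * (q - 1))"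
      by (auto intro!: exI[of _ 0])
    then show ?thesis
      by simp
  qed
  also have "\<dots> \<longleftrightarrow> coprime n (q + 1)"
    by (rule gcd_mult_dvd_iff_coprime) fact
  finally show ?thesis
    unfolding N .
qed

lemma all_cong_solutions_dvd_iff_odd:
  fixes q n :: nat
  assumes "odd q" and "q > 1" and "even n"
  shows "(\<forall>e. [e * n = (q\<^sup>2 - 1) div 2] (mod q\<^sup>2 - 1) \<longrightarrow> q + 1 dvd e) \<longleftrightarrow>
    ((\<exists>k. 2 ^ k dvd q - 1 \<and> \<not> 2 ^ k dvd n) \<and> gcd n (q + 1) = 2) \<or>
    (\<forall>k. 2 ^ k dvd q\<^sup>2 - 1 \<longrightarrow> 2 ^ k dvd n)"
proof -
  define N where "N = (q + 1) * (q - 1)"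
  have N: "q\<^sup>2 - 1 = N"
    by (simp add: N_def power2_eq_square algebra_simps)
  have "N > 0" and "even N" and "even (q - 1)"
    using assms by (simp_all add: N_def)
  have "(\<forall>e. [e * n = N div 2] (mod N) \<longrightarrow> q + 1 dvd e) \<longleftrightarrow>
      (\<nexists>e. [e * n = N div 2] (mod N)) \<or>
      ((\<exists>e. q + 1 dvd e \<and> [e * n = N div 2] (mod N)) \<and> gcd n N dvd q - 1)"
    unfolding N_def by (rule all_cong_solutions_dvd_iff) (use \<open>q > 1\<close> in simp_all)
  moreover have "(\<exists>e. [e * n = N div 2] (mod N)) \<longleftrightarrow> \<not> (\<forall>k. 2 ^ k dvd N \<longrightarrow> 2 ^ k dvd n)"
    using cong_half_solvable_iff[OF \<open>even N\<close> \<open>N > 0\<close>] by simp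
  moreover have "N div 2 = (q + 1) * ((q - 1) div 2)"
    using \<open>even (q - 1)\<close> by (simp add: N_def div_mult_swap)
  then have "(\<exists>e. q + 1 dvd e \<and> [e * n = N div 2] (mod N)) \<longleftrightarrow>
      (\<exists>f. [f * n = (q - 1) div 2] (mod q - 1))"
    unfolding N_def by (simp only:) (rule cong_solvable_in_multiples_iff, simp)
  moreover have "\<dots> \<longleftrightarrow> (\<exists>k. 2 ^ k dvd q - 1 \<and> \<not> 2 ^ k dvd n)"
    using \<open>even (q - 1)\<close> \<open>q > 1\<close> by (intro cong_half_solvable_iff) simp_all
  moreover have "gcd n N dvd q - 1 \<longleftrightarrow> gcd n (q + 1) = 2"
    if "\<exists>k. 2 ^ k dvd q - 1 \<and> \<not> 2 ^ k dvd n"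
    unfolding N_def using assms that by (rule gcd_dvd_pred_iff_gcd_succ_eq_2)
  ultimately show ?thesis
    unfolding N by argo
qed

lemma finite_field_primitive_element:
  obtains g :: "'a::{field,finite}"
  where "\<And>x. x \<noteq> 0 \<Longrightarrow> \<exists>i. x = g ^ i" and "\<And>i. g ^ i = 1 \<longleftrightarrow> CARD('a) - 1 dvd i"
proof -
  define R :: "'a ring" where "R = \<lparr>carrier = UNIV, mult = (*), one = 1, zero = 0, add = (+)\<rparr>"
  have [simp]: "carrier R = UNIV" "\<zero>\<^bsub>R\<^esub> = 0" "\<one>\<^bsub>R\<^esub> = 1" "x \<otimes>\<^bsub>R\<^esub> y = x * y" for x y
    by (simp_all add: R_def)
  have pow [simp]: "x [^]\<^bsub>mult_of R\<^esub> i = x ^ i" for x :: 'a and i :: nat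
    by (induction i) (simp_all add: nat_pow_mult_of mult.commute)
  interpret R: field R
  proof -
    have "\<exists>y. x + y = 0" "x \<noteq> 0 \<Longrightarrow> \<exists>y. x * y = 1" for x :: 'a
      by (auto intro: exI[of _ "-x"] exI[of _ "inverse x"])
    then show "field R"
      by unfold_locales (auto simp: R_def algebra_simps Units_def)
  qed
  interpret G: group "mult_of R" by (rule R.field_mult_group)
  obtain g where g: "g \<in> carrier (mult_of R)" and gen: "carrier (mult_of R) = {g [^]\<^bsub>mult_of R\<^esub> i | i::nat. i \<in> UNIV}"
    using R.finite_field_mult_group_has_gen by (auto simp: nat_pow_mult_of)
  have "G.ord g = card (carrier (mult_of R))"
    using G.generate_pow_card[OF g] G.generate_pow_on_finite_carrier[OF _ g] gen by simp
  also have "\<dots> = CARD('a) - 1"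
    by (simp add: card_Diff_singleton)
  finally have ord: "G.ord g = CARD('a) - 1" .
  show ?thesis
  proof
    show "\<exists>i. x = g ^ i" if "x \<noteq> 0" for x
      using that gen by auto
    show "g ^ i = 1 \<longleftrightarrow> CARD('a) - 1 dvd i" for i
      using G.pow_eq_id[OF g, of i] by (simp add: ord)
  qed
qed

lemma power_eq_power_iff_cong:
  fixes g :: "'a::idom"
  assumes "g \<noteq> 0" and ord: "\<And>i. g ^ i = 1 \<longleftrightarrow> N dvd i"
  shows "g ^ i = g ^ j \<longleftrightarrow> [i = j] (mod N)"
proof -
  have *: "g ^ i = g ^ j \<longleftrightarrow> [i = j] (mod N)" if "i \<le> j" for i j
  proof -
    have "g ^ j = g ^ i * g ^ (j - i)"
      using that by (simp flip: power_add)
    then have "g ^ i = g ^ j \<longleftrightarrow> g ^ (j - i) = 1"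
      using \<open>g \<noteq> 0\<close> by simp
    also have "\<dots> \<longleftrightarrow> [i = j] (mod N)"
      using that by (simp add: ord cong_altdef_nat cong_sym_eq[of i])
    finally show ?thesis .
  qed
  show ?thesis
    using *[of i j] *[of j i] by (cases "i \<le> j") (auto simp: cong_sym_eq)
qed

lemma power_half_order_eq_minus_one:
  fixes g :: "'a::{field,finite}"
  assumes ord: "\<And>i. g ^ i = 1 \<longleftrightarrow> CARD('a) - 1 dvd i" and "odd CARD('a)"
  shows "g ^ ((CARD('a) - 1) div 2) = -1"
proof -
  define N where "N = CARD('a) - 1"
  have "card {0, 1::'a} \<le> CARD('a)"
    by (rule card_mono) auto
  with \<open>odd CARD('a)\<close> have "even N" "N > 0"
    by (auto simp: N_def)
  then have "\<not> N dvd N div 2"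
    by (auto dest: dvd_imp_le)
  with \<open>even N\<close> have "(g ^ (N div 2)) ^ 2 = 1" and "g ^ (N div 2) \<noteq> 1"
    by (auto simp: ord N_def simp flip: power_mult)
  then show ?thesis
    by (simp add: power2_eq_1_iff N_def)
qed

lemma CHAR_eq_prime_of_card:
  assumes "prime p" and "CARD('a::{idom,finite}) = p ^ k"
  shows "CHAR('a) = p"
proof -
  have "prime CHAR('a)"
    by (intro prime_CHAR_semidom finite_imp_CHAR_pos) simp
  moreover have "CHAR('a) dvd p ^ k"
    using CHAR_dvd_CARD assms(2) by metis
  ultimately show ?thesis
    using \<open>prime p\<close> by (metis prime_dvd_power primes_dvd_imp_eq)
qed

lemma subfield_fermat:
  fixes K :: "'a::field set"
  assumes "is_subfield K" "finite K" "a \<in> K" "a \<noteq> 0"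
  shows "a ^ (card K - 1) = 1"
proof -
  let ?K = "K - {0}"
  have fin: "finite ?K"
    using assms(2) by simp
  have inj: "inj_on ((*) a) ?K"
    using assms(4) by (auto simp: inj_on_def)
  have "(*) a ` ?K \<subseteq> ?K"
    using assms unfolding is_subfield_def by auto
  then have img: "(*) a ` ?K = ?K"
    using card_image[OF inj] fin by (metis card_subset_eq)
  have "prod id ?K = prod id ((*) a ` ?K)"
    using img by simp
  also have "\<dots> = prod ((*) a) ?K"
    by (simp add: prod.reindex[OF inj])
  also have "\<dots> = a ^ card ?K * prod id ?K"
    by (simp add: prod.distrib)
  finally have "prod id ?K = a ^ card ?K * prod id ?K" .
  moreover have "prod id ?K \<noteq> 0"
    using fin by simp
  ultimately have "a ^ card ?K = 1"
    by simp
  moreover have "card ?K = card K - 1"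
    using assms unfolding is_subfield_def by simp
  ultimately show ?thesis
    by simp
qed

lemma card_subfield_gt_one:
  fixes K :: "'a::field set"
  assumes "is_subfield K" and "finite K"
  shows "card K > 1"
proof -
  have "card {0, 1::'a} \<le> card K"
    using assms unfolding is_subfield_def by (intro card_mono) auto
  then show ?thesis
    by simp
qed

lemma finite_subfield_iff_power_eq_one:
  fixes K :: "'a::field set"
  assumes "is_subfield K" "finite K"
  shows "x \<in> K \<longleftrightarrow> x = 0 \<or> x ^ (card K - 1) = 1"
proof -
  define R where "R = {x::'a. x \<noteq> 0 \<and> x ^ (card K - 1) = 1}"
  have pos: "card K - 1 > 0"
    using card_subfield_gt_one[OF assms] by simp
  let ?P = "monom (1::'a) (card K - 1) + [:-1:]"
  have "R \<subseteq> {x. poly ?P x = 0}"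
    by (auto simp: R_def poly_monom)
  moreover have deg: "degree ?P = card K - 1"
    using pos by (simp add: degree_add_eq_left degree_monom_eq)
  moreover have "?P \<noteq> 0"
    using pos deg by auto
  ultimately have "finite R" "card R \<le> card K - 1"
    using card_poly_roots_bound[of ?P] poly_roots_finite[of ?P]
    by (auto intro: finite_subset order.trans[OF card_mono])
  moreover have "K - {0} \<subseteq> R"
    using subfield_fermat[OF assms] by (auto simp: R_def)
  moreover have "card (K - {0}) = card K - 1"
    using assms unfolding is_subfield_def by simp
  ultimately have "K - {0} = R"
    by (metis card_seteq)
  then show ?thesis
    using assms unfolding is_subfield_def R_def by blast
qed

lemma roots_in_subfield_iff_cong:
  fixes K :: "'a::{field,finite} set" and g :: 'a
  assumes K: "is_subfield K" "card K = q" and card: "CARD('a) = q\<^sup>2"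
    and gen: "\<And>x. x \<noteq> 0 \<Longrightarrow> \<exists>i. x = g ^ i"
    and ord: "\<And>i. g ^ i = 1 \<longleftrightarrow> CARD('a) - 1 dvd i"
    and minus_one: "g ^ m = -1"
  shows "(\<forall>x. x ^ n + 1 = 0 \<longrightarrow> x \<in> K) \<longleftrightarrow> (\<forall>e. [e * n = m] (mod q\<^sup>2 - 1) \<longrightarrow> q + 1 dvd e)"
proof -
  have "q > 1"
    using card_subfield_gt_one[OF K(1)] K(2) by simp
  have "q\<^sup>2 - 1 > 0"
    using \<open>q > 1\<close> one_less_power[of q 2] by simp
  moreover have "g ^ (q\<^sup>2 - 1) = 1"
    using ord card by simp
  ultimately have "g \<noteq> 0"
    by (metis power_0_left zero_neq_one not_gr0)
  have in_K: "g ^ e \<in> K \<longleftrightarrow> q + 1 dvd e" for e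
  proof -
    have "g ^ e \<in> K \<longleftrightarrow> g ^ (e * (q - 1)) = 1"
      using finite_subfield_iff_power_eq_one[OF K(1)] K(2) \<open>g \<noteq> 0\<close> by (simp add: power_mult)
    also have "\<dots> \<longleftrightarrow> (q + 1) * (q - 1) dvd e * (q - 1)"
      by (simp add: ord card power2_eq_square algebra_simps)
    also have "\<dots> \<longleftrightarrow> q + 1 dvd e"
      using \<open>q > 1\<close> by (intro dvd_times_right_cancel_iff) simp
    finally show ?thesis .
  qed
  have root: "(g ^ e) ^ n + 1 = 0 \<longleftrightarrow> [e * n = m] (mod q\<^sup>2 - 1)" for e
  proof -
    have "(g ^ e) ^ n + 1 = 0 \<longleftrightarrow> g ^ (e * n) = g ^ m"
      by (simp add: minus_one power_mult add_eq_0_iff2)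
    then show ?thesis
      using power_eq_power_iff_cong[OF \<open>g \<noteq> 0\<close> ord] card by simp
  qed
  have "0 \<in> K"
    using K(1) unfolding is_subfield_def by simp
  have "(\<forall>x. x ^ n + 1 = 0 \<longrightarrow> x \<in> K) \<longleftrightarrow> (\<forall>e. (g ^ e) ^ n + 1 = 0 \<longrightarrow> g ^ e \<in> K)"
  proof (intro iffI allI impI)
    fix x :: 'a
    assume all: "\<forall>e. (g ^ e) ^ n + 1 = 0 \<longrightarrow> g ^ e \<in> K" and "x ^ n + 1 = 0"
    show "x \<in> K"
    proof (cases "x = 0")
      case False
      then obtain e where "x = g ^ e"
        using gen by blast
      with all \<open>x ^ n + 1 = 0\<close> show ?thesis
        by blast
    qed (use \<open>0 \<in> K\<close> in simp)
  qed blast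
  also have "\<dots> \<longleftrightarrow> (\<forall>e. [e * n = m] (mod q\<^sup>2 - 1) \<longrightarrow> q + 1 dvd e)"
    by (simp only: root in_K)
  finally show ?thesis .
qed

lemma roots_in_subfield_iff_cong_char_2:
  fixes K :: "'a::{field,finite} set"
  assumes "is_subfield K" "card K = q" "CARD('a) = q\<^sup>2" and "(-1::'a) = 1"
  shows "(\<forall>x. x ^ n + 1 = 0 \<longrightarrow> x \<in> K) \<longleftrightarrow> (\<forall>e. [e * n = 0] (mod q\<^sup>2 - 1) \<longrightarrow> q + 1 dvd e)"
proof -
  obtain g :: 'a where "\<And>x. x \<noteq> 0 \<Longrightarrow> \<exists>i. x = g ^ i" "\<And>i. g ^ i = 1 \<longleftrightarrow> CARD('a) - 1 dvd i"
    by (rule finite_field_primitive_element) (rule that)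
  moreover have "g ^ 0 = -1"
    using \<open>-1 = 1\<close> by simp
  ultimately show ?thesis
    by (rule roots_in_subfield_iff_cong[OF assms(1-3)])
qed

lemma roots_in_subfield_iff_cong_odd:
  fixes K :: "'a::{field,finite} set"
  assumes "is_subfield K" "card K = q" "CARD('a) = q\<^sup>2" and "odd q"
  shows "(\<forall>x. x ^ n + 1 = 0 \<longrightarrow> x \<in> K) \<longleftrightarrow>
    (\<forall>e. [e * n = (q\<^sup>2 - 1) div 2] (mod q\<^sup>2 - 1) \<longrightarrow> q + 1 dvd e)"
proof -
  obtain g :: 'a where gen: "\<And>x. x \<noteq> 0 \<Longrightarrow> \<exists>i. x = g ^ i"
    and ord: "\<And>i. g ^ i = 1 \<longleftrightarrow> CARD('a) - 1 dvd i"
    by (rule finite_field_primitive_element) (rule that)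
  have "g ^ ((q\<^sup>2 - 1) div 2) = -1"
    using power_half_order_eq_minus_one[OF ord] assms(3,4) by simp
  with gen ord show ?thesis
    by (rule roots_in_subfield_iff_cong[OF assms(1-3)])
qed

theorem proposition5:
  fixes p r l :: nat and K :: "'a::{field,finite} set"
  assumes "prime p" and "l < 2 * r"
    and "CARD('a) = (p ^ r) ^ 2"
    and "is_subfield K" and "card K = p ^ r"
  shows "(\<forall>x::'a. x ^ (1 + p ^ l) + 1 = 0 \<longrightarrow> x \<in> K) \<longleftrightarrow>
     ((p = 2 \<and> gcd (2 ^ l + 1) (2 ^ r + 1) = (1::nat)) \<or>
      (odd p \<and>
        (((\<exists>k::nat. 2 ^ k dvd p ^ r - 1 \<and> \<not> 2 ^ k dvd p ^ l + 1)
            \<and> gcd (p ^ l + 1) (p ^ r + 1) = 2)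
         \<or> (\<forall>k::nat. 2 ^ k dvd p ^ (2 * r) - 1 \<longrightarrow> 2 ^ k dvd p ^ l + 1))))"
proof -
  define q where "q = p ^ r"
  have "r > 0"
    using assms(2) by simp
  have card: "CARD('a) = q\<^sup>2" and "card K = q" and "p ^ (2 * r) = q\<^sup>2"
    using assms(3,5) by (simp_all add: q_def power_mult mult.commute)
  note roots_char_2 = roots_in_subfield_iff_cong_char_2[OF assms(4) \<open>card K = q\<close> card]
  note roots_odd = roots_in_subfield_iff_cong_odd[OF assms(4) \<open>card K = q\<close> card]
  have exponent: "1 + p ^ l = p ^ l + 1"
    by simp
  consider "p = 2" | "p > 2"
    using prime_ge_2_nat[OF assms(1)] by linarith
  then show ?thesis
  proof cases
    case 1
    then have "(-1::'a) = 1"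
      using CHAR_eq_prime_of_card[OF assms(1,3)[unfolded power_mult[symmetric]]] uminus_CHAR_2 by blast
    have "even q" "q > 0"
      using 1 \<open>r > 0\<close> by (simp_all add: q_def)
    then have "(\<forall>x::'a. x ^ (p ^ l + 1) + 1 = 0 \<longrightarrow> x \<in> K) \<longleftrightarrow> coprime (p ^ l + 1) (q + 1)"
      unfolding roots_char_2[OF \<open>(-1::'a) = 1\<close>] by (rule all_cong_solutions_dvd_iff_even)
    with 1 show ?thesis
      unfolding exponent q_def by (simp add: coprime_iff_gcd_eq_1)
  next
    case 2
    then have "odd p"
      using prime_odd_nat[OF assms(1)] by blast
    then have "odd q" "q > 1" "even (p ^ l + 1)"
      using \<open>r > 0\<close> \<open>p > 2\<close> one_less_power[of p r] by (simp_all add: q_def)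
    then have "(\<forall>x::'a. x ^ (p ^ l + 1) + 1 = 0 \<longrightarrow> x \<in> K) \<longleftrightarrow>
        ((\<exists>k. 2 ^ k dvd q - 1 \<and> \<not> 2 ^ k dvd p ^ l + 1) \<and> gcd (p ^ l + 1) (q + 1) = 2) \<or>
        (\<forall>k. 2 ^ k dvd q\<^sup>2 - 1 \<longrightarrow> 2 ^ k dvd p ^ l + 1)"
      unfolding roots_odd[OF \<open>odd q\<close>] by (rule all_cong_solutions_dvd_iff_odd)
    with \<open>odd p\<close> \<open>p > 2\<close> show ?thesis
      unfolding exponent \<open>p ^ (2 * r) = q\<^sup>2\<close> q_def[symmetric] by simp
  qed
qed

end
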